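(* Let $k,l$ be positive integers, let $G$ be a $k$-degenerate graph and $H$ an $l$-degenerate graph. Then $AT(G+_R H)\le k+l+1$.
   Context: A graph is $k$-degenerate if its vertices can be successively deleted so that each deleted vertex has degree at most $k$ at the time of deletion. For an orientation $D$, a subdigraph is Eulerian if every vertex has equal in- and outdegree in it; $D$ is an AT-orientation if the numbers of Eulerian subgraphs with an even and with an odd number of arcs differ; $AT(G)$ is the smallest $k$ such that $G$ has an AT-orientation of maximum outdegree at most $k-1$. $R(G)$ has vertex set $V(G)\cup E(G)$ and consists of $G$ together with, for each edge $e=xy$, a new vertex $e$ adjacent to $x$ and $y$. $G+_R H$ has vertex set $(V(G)\cup E(G))\times V(H)$, with $(u_1,u_2)\sim(v_1,v_2)$ iff [$u_1=v_1\in V(G)$ and $u_2v_2\in E(H)$] or [$u_2=v_2$ and $u_1v_1\in E(R(G))$]. *)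

theory Defs
  imports Main
begin

definition simple_graph :: "'v set \<Rightarrow> 'v set set \<Rightarrow> bool" where
  "simple_graph V E \<longleftrightarrow> finite V \<and>
     (\<forall>e\<in>E. \<exists>x y. e = {x, y} \<and> x \<noteq> y \<and> x \<in> V \<and> y \<in> V)"

definition degenerate :: "nat \<Rightarrow> 'v set \<Rightarrow> 'v set set \<Rightarrow> bool" where
  "degenerate k V E \<longleftrightarrow> (\<exists>vs. distinct vs \<and> set vs = V \<and>
     (\<forall>i < length vs. card {u \<in> set (drop (Suc i) vs). {vs ! i, u} \<in> E} \<le> k))"

definition orientation :: "'v set \<Rightarrow> 'v set set \<Rightarrow> ('v \<times> 'v) set \<Rightarrow> bool" where
  "orientation V E D \<longleftrightarrow> D \<subseteq> {(x, y). {x, y} \<in> E} \<and>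
     (\<forall>x y. {x, y} \<in> E \<longrightarrow> ((x, y) \<in> D \<longleftrightarrow> (y, x) \<notin> D))"

definition outdeg :: "('v \<times> 'v) set \<Rightarrow> 'v \<Rightarrow> nat" where
  "outdeg D v = card {u. (v, u) \<in> D}"

definition indeg :: "('v \<times> 'v) set \<Rightarrow> 'v \<Rightarrow> nat" where
  "indeg D v = card {u. (u, v) \<in> D}"

definition eulerian_sub :: "'v set \<Rightarrow> ('v \<times> 'v) set \<Rightarrow> ('v \<times> 'v) set \<Rightarrow> bool" where
  "eulerian_sub V D S \<longleftrightarrow> S \<subseteq> D \<and> (\<forall>v\<in>V. indeg S v = outdeg S v)"

definition AT_orientation :: "'v set \<Rightarrow> 'v set set \<Rightarrow> ('v \<times> 'v) set \<Rightarrow> bool" where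
  "AT_orientation V E D \<longleftrightarrow> orientation V E D \<and>
     card {S. eulerian_sub V D S \<and> even (card S)} \<noteq>
     card {S. eulerian_sub V D S \<and> odd (card S)}"

text \<open>AT(G): least k with an AT-orientation of maximum outdegree at most k-1
(written as outdeg + 1 \<le> k to avoid truncated subtraction).\<close>
definition AT :: "'v set \<Rightarrow> 'v set set \<Rightarrow> nat" where
  "AT V E = (LEAST k. \<exists>D. AT_orientation V E D \<and> (\<forall>v\<in>V. outdeg D v + 1 \<le> k))"

definition R_verts :: "'a set \<Rightarrow> 'a set set \<Rightarrow> ('a + 'a set) set" where
  "R_verts V E = Inl ` V \<union> Inr ` E"

definition R_edges :: "'a set \<Rightarrow> 'a set set \<Rightarrow> ('a + 'a set) set set" where
  "R_edges V E = {{Inl x, Inl y} | x y. {x, y} \<in> E} \<union> {{Inr e, Inl x} | e x. e \<in> E \<and> x \<in> e}"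

definition plusR_verts :: "'a set \<Rightarrow> 'a set set \<Rightarrow> 'b set \<Rightarrow> (('a + 'a set) \<times> 'b) set" where
  "plusR_verts VG EG VH = R_verts VG EG \<times> VH"

definition plusR_edges :: "'a set \<Rightarrow> 'a set set \<Rightarrow> 'b set \<Rightarrow> 'b set set \<Rightarrow> (('a + 'a set) \<times> 'b) set set" where
  "plusR_edges VG EG VH EH =
     {{(u1, u2), (v1, v2)} | u1 u2 v1 v2.
        (u1, u2) \<in> plusR_verts VG EG VH \<and> (v1, v2) \<in> plusR_verts VG EG VH \<and>
        ((u1 = v1 \<and> u1 \<in> Inl ` VG \<and> {u2, v2} \<in> EH) \<or>
         (u2 = v2 \<and> {u1, v1} \<in> R_edges VG EG))}"

end

(* Orienting every edge of a graph towards the larger value of a vertex ranking gives an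
   acyclic digraph, whose only Eulerian subdigraph is the empty one; hence it is an
   AT-orientation, and AT is at most one more than the largest number of neighbours ranked
   above a vertex. Degeneracy orders of G and H combine into such a ranking of G +_R H in
   which every vertex has at most max 2 (k + l) neighbours above it. *)

theory Submission
  imports Defs "HOL-Library.Product_Lexorder"
begin

lemma simple_graph_edgeD:
  assumes "simple_graph V E" "{x, y} \<in> E"
  shows "x \<in> V" "y \<in> V" "x \<noteq> y"
proof -
  obtain a b where "{x, y} = {a, b}" "a \<noteq> b" "a \<in> V" "b \<in> V"
    using assms unfolding simple_graph_def by blast
  then show "x \<in> V" "y \<in> V" "x \<noteq> y" by (auto simp: doubleton_eq_iff)
qed

lemma simple_graph_finite_edges:
  assumes "simple_graph V E"
  shows "finite E"
proof (rule finite_subset)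
  show "E \<subseteq> Pow V"
    using assms unfolding simple_graph_def by (auto 0 3)
  show "finite (Pow V)" using assms unfolding simple_graph_def by simp
qed

definition upper_nbrs :: "'v set set \<Rightarrow> ('v \<Rightarrow> 'c::linorder) \<Rightarrow> 'v \<Rightarrow> 'v set" where
  "upper_nbrs E r v = {u. {v, u} \<in> E \<and> r v < r u}"

definition rank_orientation :: "'v set set \<Rightarrow> ('v \<Rightarrow> 'c::linorder) \<Rightarrow> ('v \<times> 'v) set" where
  "rank_orientation E r = {(x, y). {x, y} \<in> E \<and> r x < r y}"

lemma finite_upper_nbrs:
  assumes "simple_graph V E"
  shows "finite (upper_nbrs E r v)"
proof (rule finite_subset)
  show "upper_nbrs E r v \<subseteq> V"
    unfolding upper_nbrs_def using simple_graph_edgeD[OF assms] by blast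
  show "finite V" using assms unfolding simple_graph_def by simp
qed

lemma orientation_rank_orientation:
  assumes "\<And>x y. {x, y} \<in> E \<Longrightarrow> r x \<noteq> r y"
  shows "orientation V E (rank_orientation E r)"
  unfolding orientation_def
proof (intro conjI allI impI)
  show "rank_orientation E r \<subseteq> {(x, y). {x, y} \<in> E}"
    unfolding rank_orientation_def by blast
  fix x y
  assume "{x, y} \<in> E"
  then have "r x \<noteq> r y" "{y, x} \<in> E" using assms by (simp_all add: insert_commute)
  then show "(x, y) \<in> rank_orientation E r \<longleftrightarrow> (y, x) \<notin> rank_orientation E r"
    using \<open>{x, y} \<in> E\<close> unfolding rank_orientation_def by auto
qed

lemma outdeg_rank_orientation: "outdeg (rank_orientation E r) v = card (upper_nbrs E r v)"
  unfolding outdeg_def rank_orientation_def upper_nbrs_def by simp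

text \<open>In a nonempty S, a tail of minimal rank has positive outdegree but indegree zero.\<close>
lemma eulerian_sub_ranked_empty:
  fixes r :: "'v \<Rightarrow> 'c::linorder"
  assumes "eulerian_sub V D S" "finite D" "fst ` D \<subseteq> V"
    and "\<And>x y. (x, y) \<in> D \<Longrightarrow> r x < r y"
  shows "S = {}"
proof (rule ccontr)
  assume "S \<noteq> {}"
  have SD: "S \<subseteq> D" and balanced: "\<And>v. v \<in> V \<Longrightarrow> indeg S v = outdeg S v"
    using assms(1) unfolding eulerian_sub_def by auto
  have "finite S" using SD assms(2) by (rule finite_subset)
  then obtain x where x: "x \<in> fst ` S" and x_min: "\<And>z. z \<in> fst ` S \<Longrightarrow> \<not> r z < r x"
    using ex_is_arg_min_if_finite[of "fst ` S" r] \<open>S \<noteq> {}\<close> unfolding is_arg_min_def by blast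
  then obtain y where "(x, y) \<in> S" by force
  have "{u. (x, u) \<in> S} \<subseteq> snd ` S" by force
  then have "finite {u. (x, u) \<in> S}"
    using \<open>finite S\<close> by (rule finite_subset[OF _ finite_imageI])
  then have "outdeg S x \<noteq> 0"
    unfolding outdeg_def using \<open>(x, y) \<in> S\<close> by auto
  moreover have "indeg S x = 0"
  proof -
    have "(u, x) \<notin> S" for u
      using x_min[of u] assms(4)[of u x] SD by force
    then show ?thesis unfolding indeg_def by simp
  qed
  moreover have "x \<in> V" using x SD assms(3) by blast
  ultimately show False using balanced by simp
qed

lemma AT_le_Suc_rank:
  fixes r :: "'v \<Rightarrow> 'c::linorder"
  assumes sg: "simple_graph V E"
    and rank_neq: "\<And>x y. {x, y} \<in> E \<Longrightarrow> r x \<noteq> r y"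
    and upper_card: "\<And>v. v \<in> V \<Longrightarrow> card (upper_nbrs E r v) \<le> d"
  shows "AT V E \<le> d + 1"
proof -
  let ?D = "rank_orientation E r"
  have D_sub: "?D \<subseteq> V \<times> V"
    unfolding rank_orientation_def using simple_graph_edgeD[OF sg] by blast
  have "finite V" using sg unfolding simple_graph_def by simp
  then have "finite ?D" using D_sub by (meson finite_SigmaI finite_subset)
  moreover have "fst ` ?D \<subseteq> V" using D_sub by auto
  moreover have "r x < r y" if "(x, y) \<in> ?D" for x y
    using that unfolding rank_orientation_def by simp
  ultimately have only_empty: "S = {}" if "eulerian_sub V ?D S" for S
    by (rule eulerian_sub_ranked_empty[OF that])
  have "eulerian_sub V ?D {}"
    unfolding eulerian_sub_def indeg_def outdeg_def by simp
  then have even_sub: "{S. eulerian_sub V ?D S \<and> even (card S)} = {{}}"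
    and odd_sub: "{S. eulerian_sub V ?D S \<and> odd (card S)} = {}"
    by (auto dest: only_empty)
  have "AT_orientation V E ?D"
    unfolding AT_orientation_def even_sub odd_sub
    using orientation_rank_orientation[of E r V] rank_neq by simp
  moreover have "\<forall>v\<in>V. outdeg ?D v + 1 \<le> d + 1"
    using upper_card by (simp add: outdeg_rank_orientation)
  ultimately show ?thesis unfolding AT_def by (intro Least_le) blast
qed

lemma degenerate_imp_rank:
  assumes sg: "simple_graph V E" and "degenerate d V E"
  obtains r :: "'v \<Rightarrow> nat"
  where "inj_on r V" and "\<And>v. v \<in> V \<Longrightarrow> card (upper_nbrs E r v) \<le> d"
proof -
  obtain vs where "distinct vs" and set_vs: "set vs = V"
    and later_card: "\<And>i. i < length vs \<Longrightarrow>
      card {u \<in> set (drop (Suc i) vs). {vs ! i, u} \<in> E} \<le> d"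
    using assms(2) unfolding degenerate_def by blast
  define r where "r = the_inv_into {..<length vs} ((!) vs)"
  have nth_bij: "bij_betw ((!) vs) {..<length vs} V"
    using bij_betw_nth[OF \<open>distinct vs\<close>] set_vs by simp
  then have r_bij: "bij_betw r V {..<length vs}"
    unfolding r_def by (rule bij_betw_the_inv_into)
  have nth_r: "vs ! r v = v" if "v \<in> V" for v
    unfolding r_def using nth_bij that by (rule f_the_inv_into_f_bij_betw)
  have r_nth: "r (vs ! i) = i" if "i < length vs" for i
    unfolding r_def using bij_betw_imp_inj_on[OF nth_bij] that by (simp add: the_inv_into_f_f)
  have later_iff: "u \<in> set (drop (Suc (r v)) vs) \<longleftrightarrow> r v < r u" if "u \<in> V" for u v
  proof -
    have "u \<in> set (drop (Suc (r v)) vs) \<longleftrightarrow> (\<exists>i<length vs. Suc (r v) \<le> i \<and> u = vs ! i)"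
      by (auto simp: drop_eq_nths set_nths)
    also have "\<dots> \<longleftrightarrow> r v < r u"
      using that nth_r r_nth r_bij by (metis Suc_le_eq bij_betwE lessThan_iff)
    finally show ?thesis .
  qed
  show thesis
  proof
    show "inj_on r V" using r_bij by (rule bij_betw_imp_inj_on)
    fix v
    assume "v \<in> V"
    have "upper_nbrs E r v = {u \<in> set (drop (Suc (r v)) vs). {vs ! r v, u} \<in> E}"
      unfolding upper_nbrs_def nth_r[OF \<open>v \<in> V\<close>]
      using later_iff simple_graph_edgeD(2)[OF sg] in_set_dropD set_vs by blast
    also have "card \<dots> \<le> d"
      using later_card r_bij \<open>v \<in> V\<close> by (meson bij_betwE lessThan_iff)
    finally show "card (upper_nbrs E r v) \<le> d" .
  qed
qed

lemma R_edges_simps [simp]: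
  "{Inl a, Inl b} \<in> R_edges V E \<longleftrightarrow> {a, b} \<in> E"
  "{Inl a, Inr e} \<in> R_edges V E \<longleftrightarrow> e \<in> E \<and> a \<in> e"
  "{Inr e, Inl a} \<in> R_edges V E \<longleftrightarrow> e \<in> E \<and> a \<in> e"
  "{Inr e, Inr f} \<notin> R_edges V E"
  unfolding R_edges_def by (auto simp: doubleton_eq_iff insert_commute)

lemma plusR_edges_iff:
  "{(x, h), (y, h')} \<in> plusR_edges VG EG VH EH \<longleftrightarrow>
     (x, h) \<in> plusR_verts VG EG VH \<and> (y, h') \<in> plusR_verts VG EG VH \<and>
     ((x = y \<and> x \<in> Inl ` VG \<and> {h, h'} \<in> EH) \<or> (h = h' \<and> {x, y} \<in> R_edges VG EG))"
  (is "_ \<longleftrightarrow> ?edge")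
proof
  assume "{(x, h), (y, h')} \<in> plusR_edges VG EG VH EH"
  then show ?edge
    unfolding plusR_edges_def by (auto simp: doubleton_eq_iff insert_commute)
next
  assume ?edge
  then show "{(x, h), (y, h')} \<in> plusR_edges VG EG VH EH"
    unfolding plusR_edges_def by blast
qed

lemma R_edges_neq:
  assumes "simple_graph V E" "{x, y} \<in> R_edges V E"
  shows "x \<noteq> y"
  using assms(2) simple_graph_edgeD(3)[OF assms(1)] unfolding R_edges_def
  by (auto simp: doubleton_eq_iff)

lemma simple_graph_plusR:
  assumes sgG: "simple_graph VG EG" and sgH: "simple_graph VH EH"
  shows "simple_graph (plusR_verts VG EG VH) (plusR_edges VG EG VH EH)"
  unfolding simple_graph_def
proof (intro conjI ballI)
  have "finite VG" "finite VH" using sgG sgH unfolding simple_graph_def by simp_all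
  then show "finite (plusR_verts VG EG VH)"
    unfolding plusR_verts_def R_verts_def using simple_graph_finite_edges[OF sgG] by simp
next
  fix e
  assume "e \<in> plusR_edges VG EG VH EH"
  then obtain x h y h' where e: "e = {(x, h), (y, h')}"
    and "{(x, h), (y, h')} \<in> plusR_edges VG EG VH EH"
    unfolding plusR_edges_def by blast
  then have "(x, h) \<in> plusR_verts VG EG VH" "(y, h') \<in> plusR_verts VG EG VH"
    and "(x = y \<and> {h, h'} \<in> EH) \<or> (h = h' \<and> {x, y} \<in> R_edges VG EG)"
    unfolding plusR_edges_iff by auto
  moreover from this(3) have "(x, h) \<noteq> (y, h')"
    using simple_graph_edgeD(3)[OF sgH] R_edges_neq[OF sgG] by auto
  ultimately show "\<exists>p q. e = {p, q} \<and> p \<noteq> q \<and>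
      p \<in> plusR_verts VG EG VH \<and> q \<in> plusR_verts VG EG VH"
    using e by blast
qed

text \<open>The subdivision vertices come first, each with only its two endpoints above it; the
  copies of V(G) follow, ordered lexicographically by G-rank and then H-rank, so that a
  neighbour above (a, h) is (b, h) with b above a in G or (a, h') with h' above h in H.\<close>
definition plusR_rank :: "('a \<Rightarrow> nat) \<Rightarrow> ('b \<Rightarrow> nat) \<Rightarrow> ('a + 'a set) \<times> 'b \<Rightarrow> nat \<times> nat" where
  "plusR_rank rG rH = (\<lambda>(x, h). case x of Inl a \<Rightarrow> (Suc (rG a), rH h) | Inr _ \<Rightarrow> (0, 0))"

lemma plusR_rank_simps [simp]:
  "plusR_rank rG rH (Inl a, h) = (Suc (rG a), rH h)"
  "plusR_rank rG rH (Inr e, h) = (0, 0)"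
  unfolding plusR_rank_def by simp_all

lemma plusR_rank_neq:
  assumes sgG: "simple_graph VG EG" and sgH: "simple_graph VH EH"
    and "inj_on rG VG" "inj_on rH VH"
    and edge: "{p, q} \<in> plusR_edges VG EG VH EH"
  shows "plusR_rank rG rH p \<noteq> plusR_rank rG rH q"
proof -
  obtain x h y h' where pq: "p = (x, h)" "q = (y, h')" by fastforce
  from edge consider a where "x = Inl a" "y = Inl a" "{h, h'} \<in> EH"
    | "h = h'" "{x, y} \<in> R_edges VG EG"
    unfolding pq plusR_edges_iff by blast
  then show ?thesis
  proof cases
    case 1
    then show ?thesis
      using pq simple_graph_edgeD[OF sgH] inj_on_eq_iff[OF \<open>inj_on rH VH\<close>] by auto
  next
    case 2
    then show ?thesis
      using pq simple_graph_edgeD[OF sgG] inj_on_eq_iff[OF \<open>inj_on rG VG\<close>]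
      by (cases x; cases y) auto
  qed
qed

lemma upper_nbrs_plusR_Inl:
  "upper_nbrs (plusR_edges VG EG VH EH) (plusR_rank rG rH) (Inl a, h) \<subseteq>
     (\<lambda>h'. (Inl a, h')) ` upper_nbrs EH rH h \<union> (\<lambda>b. (Inl b, h)) ` upper_nbrs EG rG a"
proof
  fix u
  assume u: "u \<in> upper_nbrs (plusR_edges VG EG VH EH) (plusR_rank rG rH) (Inl a, h)"
  obtain y h' where "u = (y, h')" by fastforce
  with u show "u \<in> (\<lambda>h'. (Inl a, h')) ` upper_nbrs EH rH h \<union>
      (\<lambda>b. (Inl b, h)) ` upper_nbrs EG rG a"
    unfolding upper_nbrs_def by (cases y) (auto simp: plusR_edges_iff)
qed

lemma upper_nbrs_plusR_Inr:
  "upper_nbrs (plusR_edges VG EG VH EH) (plusR_rank rG rH) (Inr e, h) \<subseteq> (\<lambda>a. (Inl a, h)) ` e"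
proof
  fix u
  assume u: "u \<in> upper_nbrs (plusR_edges VG EG VH EH) (plusR_rank rG rH) (Inr e, h)"
  obtain y h' where "u = (y, h')" by fastforce
  with u show "u \<in> (\<lambda>a. (Inl a, h)) ` e"
    unfolding upper_nbrs_def by (cases y) (auto simp: plusR_edges_iff)
qed

lemma card_upper_nbrs_plusR:
  assumes sgG: "simple_graph VG EG" and sgH: "simple_graph VH EH"
    and rG_card: "\<And>a. a \<in> VG \<Longrightarrow> card (upper_nbrs EG rG a) \<le> k"
    and rH_card: "\<And>h. h \<in> VH \<Longrightarrow> card (upper_nbrs EH rH h) \<le> l"
    and "v \<in> plusR_verts VG EG VH"
  shows "card (upper_nbrs (plusR_edges VG EG VH EH) (plusR_rank rG rH) v) \<le> max 2 (k + l)"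
proof -
  obtain x h where v: "v = (x, h)" and "h \<in> VH" and "x \<in> Inl ` VG \<union> Inr ` EG"
    using assms(5) unfolding plusR_verts_def R_verts_def by auto
  then consider (vertex) a where "x = Inl a" "a \<in> VG" | (edge) e where "x = Inr e" "e \<in> EG"
    by blast
  then show ?thesis
  proof cases
    case vertex
    let ?A = "(\<lambda>h'. (Inl a :: 'a + 'a set, h')) ` upper_nbrs EH rH h"
    let ?B = "(\<lambda>b. (Inl b :: 'a + 'a set, h)) ` upper_nbrs EG rG a"
    have "upper_nbrs (plusR_edges VG EG VH EH) (plusR_rank rG rH) v \<subseteq> ?A \<union> ?B"
      unfolding v vertex(1) by (rule upper_nbrs_plusR_Inl)
    then have "card (upper_nbrs (plusR_edges VG EG VH EH) (plusR_rank rG rH) v) \<le>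
        card (?A \<union> ?B)"
      by (rule card_mono[rotated]) (simp add: finite_upper_nbrs[OF sgG] finite_upper_nbrs[OF sgH])
    also have "\<dots> \<le> card ?A + card ?B" by (rule card_Un_le)
    also have "\<dots> \<le> card (upper_nbrs EH rH h) + card (upper_nbrs EG rG a)"
      by (intro add_mono card_image_le finite_upper_nbrs[OF sgH] finite_upper_nbrs[OF sgG])
    also have "\<dots> \<le> l + k"
      using rG_card rH_card \<open>h \<in> VH\<close> vertex(2) by (intro add_mono)
    finally show ?thesis by simp
  next
    case edge
    obtain a b where "e = {a, b}" using sgG edge(2) unfolding simple_graph_def by blast
    have "card (upper_nbrs (plusR_edges VG EG VH EH) (plusR_rank rG rH) v) \<le>
        card ((\<lambda>a. (Inl a :: 'a + 'a set, h)) ` e)"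
      unfolding v edge(1) using \<open>e = {a, b}\<close> by (intro card_mono[OF _ upper_nbrs_plusR_Inr]) simp
    also have "\<dots> \<le> card e" using \<open>e = {a, b}\<close> by (intro card_image_le) simp
    also have "\<dots> \<le> 2" using \<open>e = {a, b}\<close> by (simp add: card_insert_if)
    finally show ?thesis by simp
  qed
qed

lemma AT_plusR_le:
  assumes sgG: "simple_graph VG EG" and sgH: "simple_graph VH EH"
    and "degenerate k VG EG" "degenerate l VH EH"
  shows "AT (plusR_verts VG EG VH) (plusR_edges VG EG VH EH) \<le> max 2 (k + l) + 1"
proof -
  obtain rG :: "'a \<Rightarrow> nat" where "inj_on rG VG"
    and rG_card: "\<And>a. a \<in> VG \<Longrightarrow> card (upper_nbrs EG rG a) \<le> k"
    using degenerate_imp_rank[OF sgG \<open>degenerate k VG EG\<close>] by blast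
  obtain rH :: "'b \<Rightarrow> nat" where "inj_on rH VH"
    and rH_card: "\<And>h. h \<in> VH \<Longrightarrow> card (upper_nbrs EH rH h) \<le> l"
    using degenerate_imp_rank[OF sgH \<open>degenerate l VH EH\<close>] by blast
  show ?thesis
  proof (rule AT_le_Suc_rank[OF simple_graph_plusR[OF sgG sgH]])
    show "plusR_rank rG rH p \<noteq> plusR_rank rG rH q" if "{p, q} \<in> plusR_edges VG EG VH EH" for p q
      using plusR_rank_neq[OF sgG sgH \<open>inj_on rG VG\<close> \<open>inj_on rH VH\<close> that] .
    show "card (upper_nbrs (plusR_edges VG EG VH EH) (plusR_rank rG rH) v) \<le> max 2 (k + l)"
      if "v \<in> plusR_verts VG EG VH" for v
      using card_upper_nbrs_plusR[OF sgG sgH rG_card rH_card that] .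
  qed
qed

theorem corollary3p6:
  fixes VG :: "'a set" and EG :: "'a set set" and VH :: "'b set" and EH :: "'b set set"
    and k l :: nat
  assumes "k > 0" and "l > 0"
    and "simple_graph VG EG" and "simple_graph VH EH"
    and "degenerate k VG EG" and "degenerate l VH EH"
  shows "AT (plusR_verts VG EG VH) (plusR_edges VG EG VH EH) \<le> k + l + 1"
  using AT_plusR_le[OF assms(3-6)] assms(1,2) by simp

end
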